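(* Let $X$ be a finite set and $H$ a real-valued function on the nonempty subsets of $X$. Suppose there is an equivalence relation $\sim$ on $X$ such that, for all disjoint nonempty $A,B\subseteq X$, the sets $A$ and $B$ are combinatorially dependent if and only if there exist $a\in A$ and $b\in B$ with $a\sim b$. Let $\mathcal P=\{C_1,\dots,C_k\}$ be the partition of $X$ into the equivalence classes of $\sim$. Then $\mathcal H(\mathcal P)\le \mathcal H(\mathcal P')$ for every partition $\mathcal P'$ of $X$; that is, $\mathcal P$ minimizes $\mathcal H$ over all partitions of $X$.
   Context: For disjoint nonempty $A,B\subseteq X$, $A$ and $B$ are called combinatorially dependent if $H(A\cup B)<H(A)+H(B)$, and combinatorially independent otherwise. For a partition $\mathcal P$ of $X$ into nonempty classes, $\mathcal H(\mathcal P)=\sum_{Y\in\mathcal P}H(Y)$. *)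

theory Defs
  imports Complex_Main "HOL-Library.Disjoint_Sets"
begin

definition comb_dependent :: "('a set \<Rightarrow> real) \<Rightarrow> 'a set \<Rightarrow> 'a set \<Rightarrow> bool" where
  "comb_dependent H A B \<longleftrightarrow> H (A \<union> B) < H A + H B"

definition part_H :: "('a set \<Rightarrow> real) \<Rightarrow> 'a set set \<Rightarrow> real" where
  "part_H H P = (\<Sum>Y\<in>P. H Y)"

end

theory Submission
  imports Defs
begin

text \<open>Intersect the classes C of the quotient with the blocks Y of the competing partition.
  Inside a class all cells \<open>Y \<inter> C\<close> are related to each other, so repeated dependence makes
  H subadditive over them: H C is at most the sum of its cells. Inside a block, cells coming from
  different classes are unrelated, hence independent, so H is superadditive over them: H Y is at
  least the sum of its cells. Summing over classes, swapping the double sum and summing over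
  blocks gives the claim.\<close>

lemma sum_H_le_H_UN_if_unrelated:
  assumes indep: "\<And>A B. A \<subseteq> X \<Longrightarrow> B \<subseteq> X \<Longrightarrow> A \<noteq> {} \<Longrightarrow> B \<noteq> {} \<Longrightarrow> A \<inter> B = {} \<Longrightarrow>
           \<forall>a\<in>A. \<forall>b\<in>B. (a, b) \<notin> R \<Longrightarrow> \<not> comb_dependent H A B"
    and "finite I" "I \<noteq> {}"
    and "\<And>i. i \<in> I \<Longrightarrow> f i \<subseteq> X" "\<And>i. i \<in> I \<Longrightarrow> f i \<noteq> {}"
    and "disjoint_family_on f I"
    and "\<And>i j a b. i \<in> I \<Longrightarrow> j \<in> I \<Longrightarrow> i \<noteq> j \<Longrightarrow> a \<in> f i \<Longrightarrow> b \<in> f j \<Longrightarrow> (a, b) \<notin> R"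
  shows "(\<Sum>i\<in>I. H (f i)) \<le> H (\<Union>i\<in>I. f i)"
  using assms(2-7)
proof (induction I rule: finite_ne_induct)
  case (singleton i)
  then show ?case by simp
next
  case (insert i F)
  have "\<not> comb_dependent H (f i) (\<Union>j\<in>F. f j)"
  proof (rule indep)
    show "f i \<inter> (\<Union>j\<in>F. f j) = {}"
      using insert.prems(3) insert.hyps(3) by (auto simp: disjoint_family_on_def)
    show "\<forall>a\<in>f i. \<forall>b\<in>\<Union>j\<in>F. f j. (a, b) \<notin> R"
      using insert.prems(4) insert.hyps(3) by blast
  qed (use insert.prems(1,2) insert.hyps(2) in auto)
  then have "H (f i) + H (\<Union>j\<in>F. f j) \<le> H (f i \<union> (\<Union>j\<in>F. f j))"
    by (simp add: comb_dependent_def)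
  moreover have "(\<Sum>j\<in>F. H (f j)) \<le> H (\<Union>j\<in>F. f j)"
    using disjoint_family_on_mono[OF subset_insertI insert.prems(3)]
    by (intro insert.IH) (simp_all add: insert.prems, meson insert.prems(4) insertI2)
  ultimately show ?case
    using insert.hyps by simp
qed

lemma H_UN_le_sum_H_if_related:
  assumes dep: "\<And>A B. A \<subseteq> X \<Longrightarrow> B \<subseteq> X \<Longrightarrow> A \<noteq> {} \<Longrightarrow> B \<noteq> {} \<Longrightarrow> A \<inter> B = {} \<Longrightarrow>
           \<exists>a\<in>A. \<exists>b\<in>B. (a, b) \<in> R \<Longrightarrow> comb_dependent H A B"
    and "finite I" "I \<noteq> {}"
    and "\<And>i. i \<in> I \<Longrightarrow> f i \<subseteq> X" "\<And>i. i \<in> I \<Longrightarrow> f i \<noteq> {}"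
    and "disjoint_family_on f I"
    and "\<And>i j a b. i \<in> I \<Longrightarrow> j \<in> I \<Longrightarrow> a \<in> f i \<Longrightarrow> b \<in> f j \<Longrightarrow> (a, b) \<in> R"
  shows "H (\<Union>i\<in>I. f i) \<le> (\<Sum>i\<in>I. H (f i))"
  using assms(2-7)
proof (induction I rule: finite_ne_induct)
  case (singleton i)
  then show ?case by simp
next
  case (insert i F)
  have "comb_dependent H (f i) (\<Union>j\<in>F. f j)"
  proof (rule dep)
    show "f i \<inter> (\<Union>j\<in>F. f j) = {}"
      using insert.prems(3) insert.hyps(3) by (auto simp: disjoint_family_on_def)
    obtain j b where "j \<in> F" "b \<in> f j"
      using insert.hyps(2) insert.prems(2) by blast
    moreover obtain a where "a \<in> f i"
      using insert.prems(2) by blast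
    ultimately show "\<exists>a\<in>f i. \<exists>b\<in>\<Union>j\<in>F. f j. (a, b) \<in> R"
      using insert.prems(4) by blast
  qed (use insert.prems(1,2) insert.hyps(2) in auto)
  then have "H (f i \<union> (\<Union>j\<in>F. f j)) \<le> H (f i) + H (\<Union>j\<in>F. f j)"
    by (simp add: comb_dependent_def)
  moreover have "H (\<Union>j\<in>F. f j) \<le> (\<Sum>j\<in>F. H (f j))"
    using disjoint_family_on_mono[OF subset_insertI insert.prems(3)]
    by (intro insert.IH) (simp_all add: insert.prems, meson insert.prems(4) insertI2)
  ultimately show ?case
    using insert.hyps by simp
qed

lemma partition_on_UN_traces:
  assumes "partition_on X P" "Y \<subseteq> X"
  shows "(\<Union>C\<in>{C\<in>P. Y \<inter> C \<noteq> {}}. Y \<inter> C) = Y"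
  using assms by (auto simp: partition_on_def)

lemma disjoint_family_on_traces:
  assumes "partition_on X P"
  shows "disjoint_family_on (\<lambda>C. Y \<inter> C) P" "disjoint_family_on (\<lambda>C. C \<inter> Y) P"
  using assms by (auto simp: partition_on_def disjoint_def disjoint_family_on_def)

locale dependence_by_equiv =
  fixes X :: "'a set" and H :: "'a set \<Rightarrow> real" and R :: "('a \<times> 'a) set"
  assumes finite_X: "finite X"
    and equiv: "equiv X R"
    and dependent_iff: "\<And>A B. A \<subseteq> X \<Longrightarrow> B \<subseteq> X \<Longrightarrow> A \<noteq> {} \<Longrightarrow> B \<noteq> {} \<Longrightarrow> A \<inter> B = {} \<Longrightarrow>
           comb_dependent H A B \<longleftrightarrow> (\<exists>a\<in>A. \<exists>b\<in>B. (a, b) \<in> R)"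
begin

lemma dependent_if_related:
  "A \<subseteq> X \<Longrightarrow> B \<subseteq> X \<Longrightarrow> A \<noteq> {} \<Longrightarrow> B \<noteq> {} \<Longrightarrow> A \<inter> B = {} \<Longrightarrow>
    \<exists>a\<in>A. \<exists>b\<in>B. (a, b) \<in> R \<Longrightarrow> comb_dependent H A B"
  by (simp add: dependent_iff)

lemma independent_if_unrelated:
  "A \<subseteq> X \<Longrightarrow> B \<subseteq> X \<Longrightarrow> A \<noteq> {} \<Longrightarrow> B \<noteq> {} \<Longrightarrow> A \<inter> B = {} \<Longrightarrow>
    \<forall>a\<in>A. \<forall>b\<in>B. (a, b) \<notin> R \<Longrightarrow> \<not> comb_dependent H A B"
  by (simp add: dependent_iff)

lemma partition_on_classes: "partition_on X (X // R)"
  using equiv by (rule partition_on_quotient)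

lemma finite_classes: "finite (X // R)"
  using finite_X equiv by (simp add: equiv_def refl_on_def finite_quotient)

lemma class_le_sum_traces:
  assumes C: "C \<in> X // R" and P': "partition_on X P'"
  shows "H C \<le> (\<Sum>Y\<in>{Y\<in>P'. Y \<inter> C \<noteq> {}}. H (Y \<inter> C))"
proof -
  let ?T = "{Y\<in>P'. Y \<inter> C \<noteq> {}}"
  have CX: "C \<subseteq> X" "C \<noteq> {}"
    using equiv C by (simp_all add: in_quotient_imp_subset in_quotient_imp_non_empty)
  have UN: "(\<Union>Y\<in>?T. Y \<inter> C) = C"
    using partition_on_UN_traces[OF P' CX(1)] by (simp add: Int_commute)
  have "H (\<Union>Y\<in>?T. Y \<inter> C) \<le> (\<Sum>Y\<in>?T. H (Y \<inter> C))"
  proof (rule H_UN_le_sum_H_if_related[OF dependent_if_related])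
    show "finite ?T"
      using finite_elements[OF finite_X P'] by simp
    show "?T \<noteq> {}"
      using UN CX(2) by auto
    show "Y \<inter> C \<subseteq> X" for Y
      using CX(1) by blast
    show "disjoint_family_on (\<lambda>Y. Y \<inter> C) ?T"
      using disjoint_family_on_traces(2)[OF P'] by (rule disjoint_family_on_mono[rotated]) blast
    show "(a, b) \<in> R" if "a \<in> Y \<inter> C" "b \<in> Y' \<inter> C" for Y Y' a b
      using that in_quotient_imp_in_rel[OF equiv C] by blast
  qed simp_all
  with UN show ?thesis
    by simp
qed

lemma sum_traces_le_block:
  assumes P': "partition_on X P'" and Y: "Y \<in> P'"
  shows "(\<Sum>C\<in>{C\<in>X // R. Y \<inter> C \<noteq> {}}. H (Y \<inter> C)) \<le> H Y"
proof -
  let ?T = "{C\<in>X // R. Y \<inter> C \<noteq> {}}"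
  have YX: "Y \<subseteq> X" "Y \<noteq> {}"
    using P' Y by (auto simp: partition_on_def)
  have UN: "(\<Union>C\<in>?T. Y \<inter> C) = Y"
    using partition_on_UN_traces[OF partition_on_classes YX(1)] .
  have "(\<Sum>C\<in>?T. H (Y \<inter> C)) \<le> H (\<Union>C\<in>?T. Y \<inter> C)"
  proof (rule sum_H_le_H_UN_if_unrelated[OF independent_if_unrelated])
    show "finite ?T"
      using finite_classes by simp
    show "?T \<noteq> {}"
      using UN YX(2) by auto
    show "Y \<inter> C \<subseteq> X" for C
      using YX(1) by blast
    show "disjoint_family_on (\<lambda>C. Y \<inter> C) ?T"
      using disjoint_family_on_traces(1)[OF partition_on_classes]
      by (rule disjoint_family_on_mono[rotated]) blast
    show "(a, b) \<notin> R" if "C \<in> ?T" "C' \<in> ?T" "C \<noteq> C'" "a \<in> Y \<inter> C" "b \<in> Y \<inter> C'" for C C' a b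
      using that quotient_eq_iff[OF equiv, of C C' a b] by blast
  qed simp_all
  with UN show ?thesis
    by simp
qed

theorem part_H_quotient_le:
  assumes P': "partition_on X P'"
  shows "part_H H (X // R) \<le> part_H H P'"
proof -
  have "part_H H (X // R) \<le> (\<Sum>C\<in>X // R. \<Sum>Y\<in>{Y\<in>P'. Y \<inter> C \<noteq> {}}. H (Y \<inter> C))"
    unfolding part_H_def using class_le_sum_traces[OF _ P'] by (rule sum_mono)
  also have "\<dots> = (\<Sum>Y\<in>P'. \<Sum>C\<in>{C\<in>X // R. Y \<inter> C \<noteq> {}}. H (Y \<inter> C))"
    using sum.swap_restrict[OF finite_classes finite_elements[OF finite_X P'],
        of "\<lambda>C Y. H (Y \<inter> C)" "\<lambda>C Y. Y \<inter> C \<noteq> {}"] by simp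
  also have "\<dots> \<le> part_H H P'"
    unfolding part_H_def using sum_traces_le_block[OF P'] by (rule sum_mono)
  finally show ?thesis .
qed

end

theorem lemma1:
  fixes X :: "'a set" and H :: "'a set \<Rightarrow> real" and R :: "('a \<times> 'a) set"
  assumes "finite X"
    and "equiv X R"
    and "\<And>A B. A \<subseteq> X \<Longrightarrow> B \<subseteq> X \<Longrightarrow> A \<noteq> {} \<Longrightarrow> B \<noteq> {} \<Longrightarrow> A \<inter> B = {} \<Longrightarrow>
           comb_dependent H A B \<longleftrightarrow> (\<exists>a\<in>A. \<exists>b\<in>B. (a, b) \<in> R)"
    and "partition_on X P'"
  shows "part_H H (X // R) \<le> part_H H P'"
proof -
  interpret dependence_by_equiv X H R
    using assms(1-3) by unfold_locales
  show ?thesis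
    using assms(4) by (rule part_H_quotient_le)
qed

end
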